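(* Let $n\ge3$. For a Boolean algebra $\mathbf A$ let $\mathbf A^r$ be the algebra on $A$ with ternary operations $t_1(x,y,z)=x(y'+z)$, $t_h(x,y,z)=xz$ for $2\le h\le n-2$, $t_{n-1}(x,y,z)=z(y'+x)$. Let $\mathbf A_1=\mathbf A_2=\mathbf 4^r$ and $\mathbf A_3=\mathbf 2^r$, where $\mathbf 4$ and $\mathbf 2$ are the $4$- and $2$-element Boolean algebras (distinguished element $0$). Let $\mathbf D$ be an algebra with ternary operations $s_0,\dots,s_{n-2}$ and let $\mathbf A_4$ be the algebra on $D$ with operations $t_{i+1}=s_i$ ($0\le i\le n-2$); assume $t_1$ is the first projection, $t_{n-1}$ the third projection and $t_h(x,y,x)=x$ for $2\le h\le n-2$ in $\mathbf A_4$. For $a,d\in A_4$ let $\mathbf B(a,d)$ be the subalgebra of $\mathbf A_1\times\mathbf A_2\times\mathbf A_3\times\mathbf A_4$ whose universe is the set of elements of at least one of the forms $(\ast,0,\ast,a)$, $(0,0,\ast,\ast)$, $(0,\ast,\ast,d)$, $(\ast,\ast,0,\ast)$. (i) If $n$ is even and $s_0,\dots,s_{n-2}$ are J\'onsson operations for $\mathbf D$ (with $n-2$ in place of $n$), then for all $a,d$ the algebra $\mathbf B(a,d)$ is $n$-alvin (with operations $t_1,\dots,t_{n-1}$ together with the first and third projections as $t_0,t_n$). (ii) If for some $r$ and some congruences $\tilde\alpha,\tilde\beta,\tilde\gamma$ of $\mathbf A_4$ the inclusion $\tilde\alpha(\tilde\beta\circ\tilde\alpha\tilde\gamma\circ\tilde\beta)\subseteq\tilde\alpha\tilde\gamma\circ\tilde\alpha\tilde\beta\circ\stackrel{r}{\dots}$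 fails, then there are $a,d\in A_4$ and congruences $\alpha,\beta,\gamma$ of $\mathbf B(a,d)$ such that $\alpha(\beta\circ\alpha\gamma\circ\beta)\subseteq\alpha\beta\circ\alpha\gamma\circ\stackrel{r+2}{\dots}$ fails.
   Context: Boolean operations: juxtaposition (meet), $+$ (join), $'$ (complement). For relations juxtaposition is intersection and $\circ$ composition; $X\circ Y\circ\stackrel{k}{\dots}$ is the alternating composition $X\circ Y\circ X\circ\cdots$ with $k$ factors. J\'onsson (alvin) operations $t_0,\dots,t_n$: $t_0(x,y,z)=x$, $t_n(x,y,z)=z$, $t_h(x,y,x)=x$ for all $h$, $t_h(x,x,z)=t_{h+1}(x,x,z)$ for even $h$ and $t_h(x,z,z)=t_{h+1}(x,z,z)$ for odd $h$ (alvin: even/odd exchanged); an algebra is $n$-alvin if it has alvin terms $t_0,\dots,t_n$. *)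

theory Defs
  imports Main
begin

type_synonym 'a top3 = "nat \<Rightarrow> 'a \<Rightarrow> 'a \<Rightarrow> 'a \<Rightarrow> 'a"

definition jonsson :: "'a set \<Rightarrow> nat \<Rightarrow> 'a top3 \<Rightarrow> bool" where
  "jonsson S n t \<longleftrightarrow> (\<forall>x\<in>S. \<forall>y\<in>S. \<forall>z\<in>S.
     t 0 x y z = x \<and> t n x y z = z \<and> (\<forall>h\<le>n. t h x y x = x) \<and>
     (\<forall>h<n. even h \<longrightarrow> t h x x z = t (Suc h) x x z) \<and>
     (\<forall>h<n. odd h \<longrightarrow> t h x z z = t (Suc h) x z z))"

definition alvin :: "'a set \<Rightarrow> nat \<Rightarrow> 'a top3 \<Rightarrow> bool" where
  "alvin S n t \<longleftrightarrow> (\<forall>x\<in>S. \<forall>y\<in>S. \<forall>z\<in>S.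
     t 0 x y z = x \<and> t n x y z = z \<and> (\<forall>h\<le>n. t h x y x = x) \<and>
     (\<forall>h<n. odd h \<longrightarrow> t h x x z = t (Suc h) x x z) \<and>
     (\<forall>h<n. even h \<longrightarrow> t h x z z = t (Suc h) x z z))"

definition ext_proj :: "nat \<Rightarrow> 'a top3 \<Rightarrow> 'a top3" where
  "ext_proj n t h x y z = (if h = 0 then x else if h = n then z else t h x y z)"

definition congruence :: "'a set \<Rightarrow> nat \<Rightarrow> 'a top3 \<Rightarrow> ('a \<times> 'a) set \<Rightarrow> bool" where
  "congruence S n t \<theta> \<longleftrightarrow> equiv S \<theta> \<and>
     (\<forall>h\<in>{1..n-1}. \<forall>x x' y y' z z'. (x,x') \<in> \<theta> \<longrightarrow> (y,y') \<in> \<theta> \<longrightarrow> (z,z') \<in> \<theta> \<longrightarrow>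
        (t h x y z, t h x' y' z') \<in> \<theta>)"

fun altc :: "('a \<times> 'a) set \<Rightarrow> ('a \<times> 'a) set \<Rightarrow> nat \<Rightarrow> ('a \<times> 'a) set" where
  "altc X Y 0 = Id"
| "altc X Y (Suc k) = X O altc Y X k"

definition rops :: "nat \<Rightarrow> 'a::boolean_algebra top3" where
  "rops n h x y z = (if h = 1 then inf x (sup (- y) z)
                     else if h = n - 1 then inf z (sup (- y) x)
                     else inf x z)"

text \<open>A_1 = A_2 = 4^r (4 = bool set), A_3 = 2^r (2 = bool), A_4 on D with t_(i+1) = s_i.\<close>
definition prod_ops :: "nat \<Rightarrow> 'd top3 \<Rightarrow> (bool set \<times> bool set \<times> bool \<times> 'd) top3" where
  "prod_ops n s h x y z =
     (case x of (x1,x2,x3,x4) \<Rightarrow> case y of (y1,y2,y3,y4) \<Rightarrow> case z of (z1,z2,z3,z4) \<Rightarrow>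
       (rops n h x1 y1 z1, rops n h x2 y2 z2, rops n h x3 y3 z3, s (h - 1) x4 y4 z4))"

definition A4_ops :: "'d top3 \<Rightarrow> 'd top3" where
  "A4_ops s h = s (h - 1)"

definition Bset :: "'d \<Rightarrow> 'd \<Rightarrow> (bool set \<times> bool set \<times> bool \<times> 'd) set" where
  "Bset a d = {(x1,x2,x3,x4). (x2 = {} \<and> x4 = a) \<or> (x1 = {} \<and> x2 = {}) \<or>
                              (x1 = {} \<and> x4 = d) \<or> x3 = False}"

end

theory Submission
  imports Defs
begin

text \<open>
  (i) The identities defining alvin operations are equations, so they hold in a product as soon as
  they hold in every factor, and they pass to subalgebras. For even \<open>n\<close> the operations of
  \<open>A\<^sup>r\<close> are alvin on every Boolean algebra \<open>A\<close>, and shifting the Jonsson operations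
  \<open>s\<^sub>0, \<dots>, s\<^sub>n\<^sub>-\<^sub>2\<close> up by one index and adding the two projections gives alvin operations on \<open>D\<close>.

  (ii) Let \<open>(p, q)\<close> witness the failure in \<open>A\<^sub>4\<close> and let \<open>B = B(p, q)\<close>. Lift \<open>\<alpha>', \<beta>', \<gamma>'\<close> to
  congruences of \<open>B\<close> by combining them with kernels of the projections \<open>4 \<rightarrow> 2\<close> on the Boolean
  coordinates. Then \<open>u = (1, 0, 1, p)\<close> and \<open>v = (0, 1, 1, q)\<close> are related by \<open>\<alpha>(\<beta> \<circ> \<alpha>\<gamma> \<circ> \<beta>)\<close>.
  In an alternating chain of \<open>r + 2\<close> steps from \<open>u\<close> to \<open>v\<close>, the element after the first
  (\<open>\<alpha>\<beta>\<close>) step has third coordinate \<open>1\<close> and nonzero first coordinate, which in \<open>B\<close> forces its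
  last coordinate to be \<open>p\<close>; symmetrically the element before the last step ends in \<open>q\<close>.
  Projecting the remaining \<open>r\<close> steps to \<open>D\<close> gives a chain \<open>\<alpha>'\<gamma>' \<circ> \<alpha>'\<beta>' \<circ> \<dots>\<close> of length \<open>r\<close>
  from \<open>p\<close> to \<open>q\<close>, a contradiction.
\<close>

definition pair_op :: "'a top3 \<Rightarrow> 'b top3 \<Rightarrow> ('a \<times> 'b) top3" where
  "pair_op t u h x y z = (t h (fst x) (fst y) (fst z), u h (snd x) (snd y) (snd z))"

lemma prod_ops_eq_pair_op:
  "prod_ops n s = pair_op (rops n) (pair_op (rops n) (pair_op (rops n) (A4_ops s)))"
  by (auto simp: fun_eq_iff prod_ops_def pair_op_def A4_ops_def split: prod.split)

lemma ext_proj_pair_op: "ext_proj n (pair_op t u) = pair_op (ext_proj n t) (ext_proj n u)"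
  by (simp add: fun_eq_iff ext_proj_def pair_op_def)

lemma alvin_subset: "alvin S n t \<Longrightarrow> T \<subseteq> S \<Longrightarrow> alvin T n t"
  unfolding alvin_def by blast

lemma alvin_pair_op:
  assumes "alvin S n t" and "alvin T n u"
  shows "alvin (S \<times> T) n (pair_op t u)"
  using assms unfolding alvin_def pair_op_def by (simp add: mem_Times_iff)

lemma alvin_rops:
  assumes "even n" and "n \<ge> 4"
  shows "alvin (UNIV :: 'a::boolean_algebra set) n (ext_proj n (rops n))"
  unfolding alvin_def ext_proj_def rops_def
  using assms by (auto simp: inf_sup_distrib1 sup_commute inf_commute) presburger+

lemma alvin_A4_ops:
  assumes "jonsson UNIV (n - 2) s" and "n \<ge> 2"
  shows "alvin UNIV n (ext_proj n (A4_ops s))"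
  using assms unfolding alvin_def jonsson_def ext_proj_def A4_ops_def
  by auto

lemma alvin_Bset:
  assumes "even n" and "n \<ge> 3" and "jonsson UNIV (n - 2) s"
  shows "alvin (Bset a d) n (ext_proj n (prod_ops n s))"
proof -
  have "n \<ge> 4" using assms(1,2) by presburger
  then have "alvin (UNIV \<times> UNIV \<times> UNIV \<times> UNIV) n (ext_proj n (prod_ops n s))"
    unfolding prod_ops_eq_pair_op ext_proj_pair_op
    using assms by (intro alvin_pair_op alvin_rops alvin_A4_ops) auto
  then show ?thesis by (rule alvin_subset) simp
qed

definition pair_rel :: "'a rel \<Rightarrow> 'b rel \<Rightarrow> ('a \<times> 'b) rel" where
  "pair_rel R Q = {((a, b), (c, d)). (a, c) \<in> R \<and> (b, d) \<in> Q}"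

lemma pair_rel_iff [simp]: "((a, b), (c, d)) \<in> pair_rel R Q \<longleftrightarrow> (a, c) \<in> R \<and> (b, d) \<in> Q"
  by (simp add: pair_rel_def)

lemma equiv_pair_rel: "equiv UNIV R \<Longrightarrow> equiv UNIV Q \<Longrightarrow> equiv UNIV (pair_rel R Q)"
  unfolding equiv_def refl_on_def sym_def trans_def pair_rel_def by fast

lemma congruence_pair_rel:
  assumes "congruence UNIV n t R" and "congruence UNIV n u Q"
  shows "congruence UNIV n (pair_op t u) (pair_rel R Q)"
  using assms equiv_pair_rel unfolding congruence_def
  by (auto simp: pair_op_def pair_rel_def)

lemma congruence_UNIV: "congruence UNIV n t UNIV"
  by (simp add: congruence_def equiv_def refl_on_def sym_def trans_def)

lemma congruence_Id: "congruence UNIV n t Id"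
  by (simp add: congruence_def equiv_def refl_on_def sym_def trans_def)

lemma congruence_inv_image_Id:
  assumes "\<And>h x y z x' y' z'. f x = f x' \<Longrightarrow> f y = f y' \<Longrightarrow> f z = f z' \<Longrightarrow>
             f (t h x y z) = f (t h x' y' z')"
  shows "congruence UNIV n t (inv_image Id f)"
  unfolding congruence_def equiv_def
  by (auto simp: refl_on_def sym_def trans_def intro: assms)

lemma equiv_Restr: "equiv UNIV R \<Longrightarrow> equiv S (Restr R S)"
  unfolding equiv_def refl_on_def sym_def trans_def by blast

lemma congruence_Restr:
  assumes "congruence UNIV n t R"
    and "\<And>h x y z. h \<in> {1..n-1} \<Longrightarrow> x \<in> S \<Longrightarrow> y \<in> S \<Longrightarrow> z \<in> S \<Longrightarrow> t h x y z \<in> S"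
  shows "congruence S n t (Restr R S)"
  using assms unfolding congruence_def by (auto intro: equiv_Restr)

lemma mem_rops: "b \<in> rops n h X Y Z \<longleftrightarrow> rops n h (b \<in> X) (b \<in> Y) (b \<in> Z)"
  by (simp add: rops_def)

lemma congruence_mem_kernel: "congruence UNIV n (rops n) (inv_image Id (\<lambda>X. b \<in> X))"
  by (rule congruence_inv_image_Id) (simp add: mem_rops)

lemma altc_Suc_right: "altc X Y (Suc k) = altc X Y k O (if even k then X else Y)"
proof (induction k arbitrary: X Y)
  case (Suc k)
  have "altc X Y (Suc (Suc k)) = X O (altc Y X k O (if even k then Y else X))"
    using Suc.IH by simp
  then show ?case by (simp add: O_assoc)
qed simp

lemma altc_map_pair:
  assumes "(x, y) \<in> altc X Y k"
    and "\<And>a b. (a, b) \<in> X \<Longrightarrow> (f a, f b) \<in> X'"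
    and "\<And>a b. (a, b) \<in> Y \<Longrightarrow> (f a, f b) \<in> Y'"
  shows "(f x, f y) \<in> altc X' Y' k"
  using assms
proof (induction k arbitrary: X Y X' Y' x)
  case (Suc k)
  then obtain z where "(x, z) \<in> X" and "(z, y) \<in> altc Y X k" by auto
  moreover have "(f z, f y) \<in> altc Y' X' k"
    using Suc.IH[where X=Y and Y=X and X'=Y' and Y'=X'] Suc.prems(2,3) \<open>(z, y) \<in> altc Y X k\<close> by blast
  ultimately show ?case using Suc.prems(2) by auto
qed simp

lemma Bset_closed:
  assumes "n \<ge> 3"
    and t1: "\<And>x y z. s 0 x y z = x"
    and tn1: "\<And>x y z. s (n - 2) x y z = z"
    and tmid: "\<And>h x y. 2 \<le> h \<Longrightarrow> h \<le> n - 2 \<Longrightarrow> s (h - 1) x y x = x"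
    and "h \<in> {1..n-1}" and "x \<in> Bset a d" and "y \<in> Bset a d" and "z \<in> Bset a d"
  shows "prod_ops n s h x y z \<in> Bset a d"
proof -
  obtain x1 x2 x3 x4 y1 y2 y3 y4 z1 z2 z3 z4
    where xyz: "x = (x1, x2, x3, x4)" "y = (y1, y2, y3, y4)" "z = (z1, z2, z3, z4)"
    by (cases x, cases y, cases z) blast
  have x: "(x2 = {} \<and> x4 = a) \<or> (x1 = {} \<and> x2 = {}) \<or> (x1 = {} \<and> x4 = d) \<or> \<not> x3"
    and z: "(z2 = {} \<and> z4 = a) \<or> (z1 = {} \<and> z2 = {}) \<or> (z1 = {} \<and> z4 = d) \<or> \<not> z3"
    using \<open>x \<in> Bset a d\<close> \<open>z \<in> Bset a d\<close> by (simp_all add: xyz Bset_def)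
  consider "h = 1" | "h = n - 1" | "2 \<le> h \<and> h \<le> n - 2"
    using assms(1,5) by fastforce
  then show ?thesis
  proof cases
    case 1
    then have "prod_ops n s h x y z = (x1 \<inter> (- y1 \<union> z1), x2 \<inter> (- y2 \<union> z2), x3 \<and> (\<not> y3 \<or> z3), x4)"
      using t1 by (simp add: xyz prod_ops_def rops_def)
    then show ?thesis using x by (elim disjE) (simp_all add: Bset_def)
  next
    case 2
    then have "h \<noteq> 1" "h - 1 = n - 2" using assms(1) by auto
    with 2 have "prod_ops n s h x y z = (z1 \<inter> (- y1 \<union> x1), z2 \<inter> (- y2 \<union> x2), z3 \<and> (\<not> y3 \<or> x3), z4)"
      using tn1 by (simp add: xyz prod_ops_def rops_def)
    then show ?thesis using z by (elim disjE) (simp_all add: Bset_def)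
  next
    case 3
    then have "h \<noteq> 1" "h \<noteq> n - 1" using assms(1) by auto
    then have "prod_ops n s h x y z = (x1 \<inter> z1, x2 \<inter> z2, x3 \<and> z3, s (h - 1) x4 y4 z4)"
      by (simp add: xyz prod_ops_def rops_def)
    moreover have "s (h - 1) a y4 a = a" "s (h - 1) d y4 d = d"
      using tmid 3 by auto
    ultimately show ?thesis using x z by (elim disjE) (simp_all add: Bset_def)
  qed
qed

lemma Bset_fst_nonempty: "(X1, X2, True, x) \<in> Bset a d \<Longrightarrow> X1 \<noteq> {} \<Longrightarrow> x = a"
  by (auto simp: Bset_def)

lemma Bset_snd_nonempty: "(X1, X2, True, x) \<in> Bset a d \<Longrightarrow> X2 \<noteq> {} \<Longrightarrow> x = d"
  by (auto simp: Bset_def)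

text \<open>The type \<open>bool set\<close> models \<open>4 = 2 \<times> 2\<close>; the kernels of \<open>X \<mapsto> True \<in> X\<close> and
  \<open>X \<mapsto> False \<in> X\<close> are those of its two projections onto \<open>2\<close>.\<close>

definition lift_alpha :: "'d rel \<Rightarrow> (bool set \<times> bool set \<times> bool \<times> 'd) rel" where
  "lift_alpha \<theta> = pair_rel UNIV (pair_rel UNIV (pair_rel Id \<theta>))"

definition lift_beta :: "'d rel \<Rightarrow> (bool set \<times> bool set \<times> bool \<times> 'd) rel" where
  "lift_beta \<theta> =
     pair_rel (inv_image Id (\<lambda>X. True \<in> X)) (pair_rel (inv_image Id (\<lambda>X. True \<in> X)) (pair_rel UNIV \<theta>))"

definition lift_gamma :: "'d rel \<Rightarrow> (bool set \<times> bool set \<times> bool \<times> 'd) rel" where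
  "lift_gamma \<theta> =
     pair_rel (inv_image Id (\<lambda>X. False \<in> X)) (pair_rel (inv_image Id (\<lambda>X. False \<in> X)) (pair_rel Id \<theta>))"

lemma congruence_lifts:
  assumes "congruence UNIV n (A4_ops s) \<theta>"
  shows "congruence UNIV n (prod_ops n s) (lift_alpha \<theta>)"
    and "congruence UNIV n (prod_ops n s) (lift_beta \<theta>)"
    and "congruence UNIV n (prod_ops n s) (lift_gamma \<theta>)"
  unfolding prod_ops_eq_pair_op lift_alpha_def lift_beta_def lift_gamma_def
  by (intro congruence_pair_rel congruence_UNIV congruence_Id congruence_mem_kernel assms)+

lemma Bset_pentagon_witness:
  fixes p q :: 'd and \<alpha>' \<beta>' \<gamma>' :: "'d rel"
  defines "\<alpha> \<equiv> Restr (lift_alpha \<alpha>') (Bset p q)"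
    and "\<beta> \<equiv> Restr (lift_beta \<beta>') (Bset p q)"
    and "\<gamma> \<equiv> Restr (lift_gamma \<gamma>') (Bset p q)"
  assumes "(p, q) \<in> \<alpha>' \<inter> (\<beta>' O (\<alpha>' \<inter> \<gamma>') O \<beta>')"
  shows "((UNIV, {}, True, p), ({}, UNIV, True, q)) \<in> \<alpha> \<inter> (\<beta> O (\<alpha> \<inter> \<gamma>) O \<beta>)"
proof -
  from assms(4) obtain e1 e2
    where "(p, q) \<in> \<alpha>'" "(p, e1) \<in> \<beta>'" "(e1, e2) \<in> \<alpha>'" "(e1, e2) \<in> \<gamma>'" "(e2, q) \<in> \<beta>'"
    by blast
  then have "((UNIV, {}, True, p), ({True}, {False}, False, e1)) \<in> \<beta>"
    and "(({True}, {False}, False, e1), ({}, UNIV, False, e2)) \<in> \<alpha> \<inter> \<gamma>"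
    and "(({}, UNIV, False, e2), ({}, UNIV, True, q)) \<in> \<beta>"
    and "((UNIV, {}, True, p), ({}, UNIV, True, q)) \<in> \<alpha>"
    by (simp_all add: \<alpha>_def \<beta>_def \<gamma>_def lift_alpha_def lift_beta_def lift_gamma_def Bset_def)
  then show ?thesis by blast
qed

lemma Bset_altc_reflect:
  fixes p q :: 'd and \<alpha>' \<beta>' \<gamma>' :: "'d rel"
  defines "\<alpha> \<equiv> Restr (lift_alpha \<alpha>') (Bset p q)"
    and "\<beta> \<equiv> Restr (lift_beta \<beta>') (Bset p q)"
    and "\<gamma> \<equiv> Restr (lift_gamma \<gamma>') (Bset p q)"
  assumes "((UNIV, {}, True, p), ({}, UNIV, True, q)) \<in> altc (\<alpha> \<inter> \<beta>) (\<alpha> \<inter> \<gamma>) (r + 2)"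
  shows "(p, q) \<in> altc (\<alpha>' \<inter> \<gamma>') (\<alpha>' \<inter> \<beta>') r"
proof -
  have "altc (\<alpha> \<inter> \<beta>) (\<alpha> \<inter> \<gamma>) (r + 2) = (\<alpha> \<inter> \<beta>) O altc (\<alpha> \<inter> \<gamma>) (\<alpha> \<inter> \<beta>) (Suc r)"
    by simp
  also have "\<dots> \<subseteq> (\<alpha> \<inter> \<beta>) O altc (\<alpha> \<inter> \<gamma>) (\<alpha> \<inter> \<beta>) r O (\<alpha> \<inter> (\<beta> \<union> \<gamma>))"
    unfolding altc_Suc_right by auto
  finally obtain z' w'
    where "((UNIV, {}, True, p), z') \<in> \<alpha> \<inter> \<beta>"
      and "(z', w') \<in> altc (\<alpha> \<inter> \<gamma>) (\<alpha> \<inter> \<beta>) r"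
      and "(w', ({}, UNIV, True, q)) \<in> \<alpha> \<inter> (\<beta> \<union> \<gamma>)"
    using assms(4) by blast
  moreover obtain Z1 Z2 Z3 z W1 W2 W3 w where "z' = (Z1, Z2, Z3, z)" and "w' = (W1, W2, W3, w)"
    using prod_cases4 by metis
  ultimately have first: "((UNIV, {}, True, p), (Z1, Z2, Z3, z)) \<in> \<alpha> \<inter> \<beta>"
    and middle: "((Z1, Z2, Z3, z), (W1, W2, W3, w)) \<in> altc (\<alpha> \<inter> \<gamma>) (\<alpha> \<inter> \<beta>) r"
    and last: "((W1, W2, W3, w), ({}, UNIV, True, q)) \<in> \<alpha> \<inter> (\<beta> \<union> \<gamma>)"
    by simp_all
  from first have "z = p"
    by (intro Bset_fst_nonempty[of Z1 Z2 z p q])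
       (auto simp: \<alpha>_def \<beta>_def lift_alpha_def lift_beta_def)
  moreover from last have "w = q"
    by (intro Bset_snd_nonempty[of W1 W2 w p q])
       (auto simp: \<alpha>_def \<beta>_def \<gamma>_def lift_alpha_def lift_beta_def lift_gamma_def)
  moreover have "(snd (snd (snd (Z1, Z2, Z3, z))), snd (snd (snd (W1, W2, W3, w))))
      \<in> altc (\<alpha>' \<inter> \<gamma>') (\<alpha>' \<inter> \<beta>') r"
    by (rule altc_map_pair[OF middle])
       (auto simp: \<alpha>_def \<beta>_def \<gamma>_def lift_alpha_def lift_beta_def lift_gamma_def)
  ultimately show ?thesis by simp
qed

lemma Bset_pentagon_failure:
  fixes s :: "'d top3"
  assumes "n \<ge> 3"
    and "\<And>x y z. s 0 x y z = x"
    and "\<And>x y z. s (n - 2) x y z = z"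
    and "\<And>h x y. 2 \<le> h \<Longrightarrow> h \<le> n - 2 \<Longrightarrow> s (h - 1) x y x = x"
    and "congruence UNIV n (A4_ops s) \<alpha>'"
    and "congruence UNIV n (A4_ops s) \<beta>'"
    and "congruence UNIV n (A4_ops s) \<gamma>'"
    and "\<not> \<alpha>' \<inter> (\<beta>' O (\<alpha>' \<inter> \<gamma>') O \<beta>') \<subseteq> altc (\<alpha>' \<inter> \<gamma>') (\<alpha>' \<inter> \<beta>') r"
  shows "\<exists>a d \<alpha> \<beta> \<gamma>.
           congruence (Bset a d) n (prod_ops n s) \<alpha>
         \<and> congruence (Bset a d) n (prod_ops n s) \<beta>
         \<and> congruence (Bset a d) n (prod_ops n s) \<gamma>
         \<and> \<not> \<alpha> \<inter> (\<beta> O (\<alpha> \<inter> \<gamma>) O \<beta>) \<subseteq> altc (\<alpha> \<inter> \<beta>) (\<alpha> \<inter> \<gamma>) (r + 2)"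
proof -
  obtain p q where pq: "(p, q) \<in> \<alpha>' \<inter> (\<beta>' O (\<alpha>' \<inter> \<gamma>') O \<beta>')"
    and not_pq: "(p, q) \<notin> altc (\<alpha>' \<inter> \<gamma>') (\<alpha>' \<inter> \<beta>') r"
    using assms(8) by auto
  define \<alpha> where "\<alpha> = Restr (lift_alpha \<alpha>') (Bset p q)"
  define \<beta> where "\<beta> = Restr (lift_beta \<beta>') (Bset p q)"
  define \<gamma> where "\<gamma> = Restr (lift_gamma \<gamma>') (Bset p q)"
  note restrict = congruence_Restr[OF _ Bset_closed[OF assms(1-4)]]
  have "congruence (Bset p q) n (prod_ops n s) \<alpha>"
    unfolding \<alpha>_def by (rule restrict[OF congruence_lifts(1)[OF assms(5)]])
  moreover have "congruence (Bset p q) n (prod_ops n s) \<beta>"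
    unfolding \<beta>_def by (rule restrict[OF congruence_lifts(2)[OF assms(6)]])
  moreover have "congruence (Bset p q) n (prod_ops n s) \<gamma>"
    unfolding \<gamma>_def by (rule restrict[OF congruence_lifts(3)[OF assms(7)]])
  moreover have "((UNIV, {}, True, p), ({}, UNIV, True, q)) \<in> \<alpha> \<inter> (\<beta> O (\<alpha> \<inter> \<gamma>) O \<beta>)"
    unfolding \<alpha>_def \<beta>_def \<gamma>_def using pq by (rule Bset_pentagon_witness)
  moreover have "((UNIV, {}, True, p), ({}, UNIV, True, q)) \<notin> altc (\<alpha> \<inter> \<beta>) (\<alpha> \<inter> \<gamma>) (r + 2)"
    unfolding \<alpha>_def \<beta>_def \<gamma>_def using not_pq by (blast dest: Bset_altc_reflect)
  ultimately show ?thesis by blast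
qed

theorem theorem3p9:
  fixes n :: nat and s :: "'d top3"
  assumes n3: "n \<ge> 3"
    and t1: "\<And>x y z. s 0 x y z = x"
    and tn1: "\<And>x y z. s (n - 2) x y z = z"
    and tmid: "\<And>h x y. 2 \<le> h \<Longrightarrow> h \<le> n - 2 \<Longrightarrow> s (h - 1) x y x = x"
  shows "(even n \<and> jonsson (UNIV :: 'd set) (n - 2) s \<longrightarrow>
            (\<forall>a d. alvin (Bset a d) n (ext_proj n (prod_ops n s))))
       \<and> (\<forall>r \<alpha>' \<beta>' \<gamma>'. r \<ge> 1
            \<and> congruence (UNIV :: 'd set) n (A4_ops s) \<alpha>'
            \<and> congruence (UNIV :: 'd set) n (A4_ops s) \<beta>'
            \<and> congruence (UNIV :: 'd set) n (A4_ops s) \<gamma>'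
            \<and> \<not> (\<alpha>' \<inter> (\<beta>' O (\<alpha>' \<inter> \<gamma>') O \<beta>') \<subseteq> altc (\<alpha>' \<inter> \<gamma>') (\<alpha>' \<inter> \<beta>') r)
          \<longrightarrow> (\<exists>a d \<alpha> \<beta> \<gamma>.
                 congruence (Bset a d) n (prod_ops n s) \<alpha>
               \<and> congruence (Bset a d) n (prod_ops n s) \<beta>
               \<and> congruence (Bset a d) n (prod_ops n s) \<gamma>
               \<and> \<not> (\<alpha> \<inter> (\<beta> O (\<alpha> \<inter> \<gamma>) O \<beta>) \<subseteq> altc (\<alpha> \<inter> \<beta>) (\<alpha> \<inter> \<gamma>) (r + 2))))"
proof (intro conjI impI allI)
  fix a d
  assume "even n \<and> jonsson UNIV (n - 2) s"
  then show "alvin (Bset a d) n (ext_proj n (prod_ops n s))"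
    by (simp add: alvin_Bset n3)
qed (elim conjE, rule Bset_pentagon_failure[where s = s, OF n3 t1 tn1 tmid])

end
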